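(* Let $W_N$ be the Weyl algebra generated by the entries of $N\times N$ matrices $X=\|x_i^j\|$ and $D=\|\partial/\partial x_j^i\|$, which satisfy $X_1X_2=X_2X_1$, $D_1D_2=D_2D_1$, $D_1X_2=X_2D_1+P_{12}$, and let $L=XD$. Then for every integer $n\ge 1$, in $Mat_{N\times N}(\mathbb{C})^{\otimes n}\otimes W_N$, $$L_1(L_2-j_2)\cdots(L_n-j_n)=X_1\cdots X_n\,D_1\cdots D_n,$$ where $j_k=\sum_{i=1}^{k-1}P_{ik}$.
   Context: For a matrix $A$ with entries in an algebra, $A_i=\mathbb{E}\otimes\cdots\otimes A\otimes\cdots\otimes\mathbb{E}$ with $A$ in the $i$-th tensor factor and the identity matrix $\mathbb{E}$ elsewhere. $P_{ik}$ denotes the permutation matrix acting in tensor factors $i$ and $k$, with $P_{kl}^{mn}=\delta_k^n\delta_l^m$. The elements $j_k$ are the images of the Jucys–Murphy elements of $\mathbb{C}[S_n]$. The map sending the generators of $U(\mathbf{gl}_N)$ to the entries of $XD$ embeds $U(\mathbf{gl}_N)$ into $W_N$. *)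

theory Defs
  imports Main
begin

text \<open>Elements of Mat_{N x N}(C)^{tensor n} tensor A are represented as matrices whose rows and
columns are indexed by multi-indices I = (i_1,...,i_n) (lists of length n with entries < N)
and whose entries lie in the (noncommutative) ring A.  Only entries at valid multi-indices
are meaningful; equality is therefore taken on valid multi-indices (teq).\<close>

type_synonym 'a tmat = "nat list \<Rightarrow> nat list \<Rightarrow> 'a"

definition idx :: "nat \<Rightarrow> nat \<Rightarrow> nat list set" where
  "idx N n = {I. length I = n \<and> set I \<subseteq> {..<N}}"

definition teq :: "nat \<Rightarrow> nat \<Rightarrow> 'a tmat \<Rightarrow> 'a tmat \<Rightarrow> bool" where
  "teq N n A B \<longleftrightarrow> (\<forall>I\<in>idx N n. \<forall>J\<in>idx N n. A I J = B I J)"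

definition tmul :: "nat \<Rightarrow> nat \<Rightarrow> 'a::ring_1 tmat \<Rightarrow> 'a tmat \<Rightarrow> 'a tmat" where
  "tmul N n A B = (\<lambda>I K. \<Sum>J\<in>idx N n. A I J * B J K)"

definition tone :: "'a::ring_1 tmat" where
  "tone = (\<lambda>I J. of_bool (I = J))"

definition emb :: "nat \<Rightarrow> nat \<Rightarrow> (nat \<Rightarrow> nat \<Rightarrow> 'a::ring_1) \<Rightarrow> 'a tmat" where
  "emb n k A = (\<lambda>I J. A (I ! k) (J ! k) *
      of_bool (\<forall>m<n. m \<noteq> k \<longrightarrow> I ! m = J ! m))"

text \<open>P_{ik} (0-based positions), with P_{kl}^{mn} = delta_k^n delta_l^m, i.e. the entry
at row (a_i,a_k), column (b_i,b_k) is delta(a_i,b_k) delta(a_k,b_i).\<close>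
definition tperm :: "nat \<Rightarrow> nat \<Rightarrow> nat \<Rightarrow> 'a::ring_1 tmat" where
  "tperm n i k = (\<lambda>I J. of_bool (I ! i = J ! k \<and> I ! k = J ! i \<and>
      (\<forall>m<n. m \<noteq> i \<and> m \<noteq> k \<longrightarrow> I ! m = J ! m)))"

text \<open>Jucys--Murphy element at 0-based position k (= j_{k+1} in 1-based notation):
sum of P_{i,k} over i < k.\<close>
definition jm :: "nat \<Rightarrow> nat \<Rightarrow> 'a::ring_1 tmat" where
  "jm n k = (\<lambda>I J. \<Sum>i<k. tperm n i k I J)"

primrec tprod :: "nat \<Rightarrow> nat \<Rightarrow> (nat \<Rightarrow> 'a::ring_1 tmat) \<Rightarrow> nat \<Rightarrow> 'a tmat" where
  "tprod N n F 0 = tone"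
| "tprod N n F (Suc m) = tmul N n (tprod N n F m) (F m)"

definition mminus :: "'a::ring_1 tmat \<Rightarrow> 'a tmat \<Rightarrow> 'a tmat" where
  "mminus A B = (\<lambda>I J. A I J - B I J)"

definition matmul :: "nat \<Rightarrow> (nat \<Rightarrow> nat \<Rightarrow> 'a::ring_1) \<Rightarrow> (nat \<Rightarrow> nat \<Rightarrow> 'a) \<Rightarrow> nat \<Rightarrow> nat \<Rightarrow> 'a" where
  "matmul N A B = (\<lambda>a b. \<Sum>c<N. A a c * B c b)"

end

theory Submission
  imports Defs "HOL-Combinatorics.Transposition"
begin

(* Write Q_p = D_1 ... D_p.  By induction on m it suffices to show
   Q_m (L_{m+1} - j_{m+1}) = X_{m+1} Q_{m+1}.  Moving D_k (k <= m) past X_{m+1} produces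
   P_{k,m+1}, and P_{k,m+1} D_{m+1} = D_k P_{k,m+1}; as the D's commute with each other this gives
   Q_m X_{m+1} D_{m+1} = X_{m+1} Q_m D_{m+1} + Q_m j_{m+1}, which is the claim because
   L_{m+1} = X_{m+1} D_{m+1}. *)

definition tadd :: "'a::ring_1 tmat \<Rightarrow> 'a tmat \<Rightarrow> 'a tmat" where
  "tadd A B = (\<lambda>I J. A I J + B I J)"

(* Off the valid multi-indices tone is not a unit and the commutation relations need not hold;
   multiplying with rmul, which discards those entries, turns every identity modulo teq into an
   equation that can be used for rewriting. *)
definition trestr :: "nat \<Rightarrow> nat \<Rightarrow> 'a::zero tmat \<Rightarrow> 'a tmat" where
  "trestr N n A = (\<lambda>I J. if I \<in> idx N n \<and> J \<in> idx N n then A I J else 0)"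

definition rmul :: "nat \<Rightarrow> nat \<Rightarrow> 'a::ring_1 tmat \<Rightarrow> 'a tmat \<Rightarrow> 'a tmat" where
  "rmul N n A B = trestr N n (tmul N n A B)"

lemma finite_idx: "finite (idx N n)"
  unfolding idx_def using finite_lists_length_eq[of "{..<N}" n] by (simp add: conj_commute)

lemma length_idx: "I \<in> idx N n \<Longrightarrow> length I = n"
  unfolding idx_def by simp

lemma nth_idx_less: "I \<in> idx N n \<Longrightarrow> r < n \<Longrightarrow> I ! r < N"
  unfolding idx_def using nth_mem by fastforce

lemma list_update_idx: "I \<in> idx N n \<Longrightarrow> c < N \<Longrightarrow> I[k := c] \<in> idx N n"
  unfolding idx_def using set_update_subset_insert by fastforce

lemma teq_iff_trestr_eq: "teq N n A B \<longleftrightarrow> trestr N n A = trestr N n B"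
  by (auto simp: teq_def trestr_def fun_eq_iff)

lemma trestr_eqI:
  "(\<And>I J. I \<in> idx N n \<Longrightarrow> J \<in> idx N n \<Longrightarrow> A I J = B I J) \<Longrightarrow> trestr N n A = trestr N n B"
  by (simp add: trestr_def fun_eq_iff)

lemma tmul_assoc: "tmul N n (tmul N n A B) C = tmul N n A (tmul N n B C)"
proof (intro ext)
  fix I K
  have "tmul N n (tmul N n A B) C I K = (\<Sum>J\<in>idx N n. \<Sum>L\<in>idx N n. A I L * B L J * C J K)"
    by (simp add: tmul_def sum_distrib_right)
  also have "\<dots> = (\<Sum>L\<in>idx N n. \<Sum>J\<in>idx N n. A I L * B L J * C J K)"
    by (rule sum.swap)
  also have "\<dots> = tmul N n A (tmul N n B C) I K"
    by (simp add: tmul_def sum_distrib_left mult.assoc)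
  finally show "tmul N n (tmul N n A B) C I K = tmul N n A (tmul N n B C) I K" .
qed

lemma rmul_trestr_left [simp]: "rmul N n (trestr N n A) B = rmul N n A B"
  unfolding rmul_def trestr_def tmul_def by (auto simp: fun_eq_iff intro!: sum.cong)

lemma rmul_trestr_right [simp]: "rmul N n A (trestr N n B) = rmul N n A B"
  unfolding rmul_def trestr_def tmul_def by (auto simp: fun_eq_iff intro!: sum.cong)

lemma trestr_trestr [simp]: "trestr N n (trestr N n A) = trestr N n A"
  by (simp add: trestr_def fun_eq_iff)

lemma rmul_assoc: "rmul N n (rmul N n A B) C = rmul N n A (rmul N n B C)"
  by (metis rmul_def rmul_trestr_left rmul_trestr_right tmul_assoc)

lemma rmul_tadd_right: "rmul N n A (tadd B C) = tadd (rmul N n A B) (rmul N n A C)"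
  unfolding rmul_def trestr_def tmul_def tadd_def by (auto simp: fun_eq_iff distrib_left sum.distrib)

lemma rmul_tadd_left: "rmul N n (tadd A B) C = tadd (rmul N n A C) (rmul N n B C)"
  unfolding rmul_def trestr_def tmul_def tadd_def by (auto simp: fun_eq_iff distrib_right sum.distrib)

lemma rmul_mminus_right: "rmul N n A (mminus B C) = mminus (rmul N n A B) (rmul N n A C)"
  unfolding rmul_def trestr_def tmul_def mminus_def
  by (auto simp: fun_eq_iff right_diff_distrib sum_subtractf)

lemma rmul_zero_right [simp]: "rmul N n A (\<lambda>I J. 0) = (\<lambda>I J. 0)"
  unfolding rmul_def trestr_def tmul_def by (auto simp: fun_eq_iff)

lemma rmul_zero_left [simp]: "rmul N n (\<lambda>I J. 0) A = (\<lambda>I J. 0)"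
  unfolding rmul_def trestr_def tmul_def by (auto simp: fun_eq_iff)

lemma tadd_assoc: "tadd (tadd A B) C = tadd A (tadd B C)"
  unfolding tadd_def by (simp add: add.assoc)

lemma tadd_zero_right [simp]: "tadd A (\<lambda>I J. 0) = A"
  unfolding tadd_def by simp

lemma mminus_tadd_cancel: "mminus (tadd A B) B = A"
  unfolding tadd_def mminus_def by simp

lemma tmul_eq_single:
  assumes "J0 \<in> idx N n" and "\<And>J. J \<in> idx N n \<Longrightarrow> J \<noteq> J0 \<Longrightarrow> A I J * B J K = 0"
  shows "tmul N n A B I K = A I J0 * B J0 K"
  unfolding tmul_def using assms by (simp add: sum.remove[OF finite_idx] sum.neutral)

lemma tmul_tone_left: "I \<in> idx N n \<Longrightarrow> tmul N n tone A I K = A I K"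
  by (subst tmul_eq_single) (auto simp: tone_def)

lemma tmul_tone_right: "K \<in> idx N n \<Longrightarrow> tmul N n A tone I K = A I K"
  by (subst tmul_eq_single) (auto simp: tone_def)

lemma rmul_tone_left [simp]: "rmul N n tone A = trestr N n A"
  by (auto simp: rmul_def trestr_def fun_eq_iff tmul_tone_left)

lemma rmul_tone_right [simp]: "rmul N n A tone = trestr N n A"
  by (auto simp: rmul_def trestr_def fun_eq_iff tmul_tone_right)

lemma tmul_emb_left:
  assumes k: "k < n" and I: "I \<in> idx N n"
  shows "tmul N n (emb n k A) B I K = (\<Sum>c<N. A (I ! k) c * B (I[k := c]) K)"
proof -
  let ?f = "\<lambda>J. emb n k A I J * B J K" and ?upd = "\<lambda>c. I[k := c]"
  have upd_idx: "?upd ` {..<N} \<subseteq> idx N n"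
    using list_update_idx[OF I] by auto
  have "tmul N n (emb n k A) B I K = sum ?f (?upd ` {..<N})"
    unfolding tmul_def
  proof (rule sum.mono_neutral_right[OF finite_idx upd_idx], rule ballI)
    fix J assume J: "J \<in> idx N n - ?upd ` {..<N}"
    have "\<not> (\<forall>m<n. m \<noteq> k \<longrightarrow> I ! m = J ! m)"
    proof
      assume "\<forall>m<n. m \<noteq> k \<longrightarrow> I ! m = J ! m"
      moreover have "length J = n" "length I = n"
        using J I length_idx by auto
      ultimately have "J = ?upd (J ! k)"
        using k by (auto intro!: nth_equalityI simp: nth_list_update)
      moreover have "J ! k < N"
        using J k nth_idx_less by blast
      ultimately show False
        using J by blast
    qed
    then show "?f J = 0"
      by (auto simp: emb_def)
  qed
  also have "\<dots> = sum (?f \<circ> ?upd) {..<N}"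
    by (rule sum.reindex) (use k length_idx[OF I] in \<open>auto simp: inj_on_def dest: arg_cong[where f="\<lambda>xs. xs ! k"]\<close>)
  also have "\<dots> = (\<Sum>c<N. A (I ! k) c * B (I[k := c]) K)"
    using k length_idx[OF I] by (simp add: emb_def nth_list_update)
  finally show ?thesis .
qed

lemma tmul_emb_same:
  assumes "k < n" and "I \<in> idx N n"
  shows "tmul N n (emb n k A) (emb n k B) I K = emb n k (matmul N A B) I K"
  unfolding tmul_emb_left[OF assms]
  using assms length_idx[OF assms(2)]
  by (simp add: emb_def matmul_def nth_list_update sum_distrib_right mult.assoc
      cong: conj_cong)

lemma tmul_emb_emb:
  assumes k: "k < n" and l: "l < n" and "k \<noteq> l" and I: "I \<in> idx N n" and K: "K \<in> idx N n"
  shows "tmul N n (emb n k A) (emb n l B) I K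
     = A (I ! k) (K ! k) * B (I ! l) (K ! l) * of_bool (\<forall>r<n. r \<noteq> k \<and> r \<noteq> l \<longrightarrow> I ! r = K ! r)"
proof -
  have "emb n l B (I[k := c]) K = (if c = K ! k
      then B (I ! l) (K ! l) * of_bool (\<forall>r<n. r \<noteq> k \<and> r \<noteq> l \<longrightarrow> I ! r = K ! r) else 0)" for c
    using assms length_idx[OF I] by (auto simp: emb_def nth_list_update)
  moreover have "K ! k < N"
    using K k by (rule nth_idx_less)
  ultimately show ?thesis
    unfolding tmul_emb_left[OF k I] by (simp add: mult.assoc if_distrib[where f = "times _"] cong: if_cong)
qed

lemma tperm_eq_swap:
  assumes "length I = n" "length J = n" "i < n" "m < n"
  shows "tperm n i m I J = of_bool (J = I[i := I ! m, m := I ! i])"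
proof -
  have "(I ! i = J ! m \<and> I ! m = J ! i \<and> (\<forall>r<n. r \<noteq> i \<and> r \<noteq> m \<longrightarrow> I ! r = J ! r))
      \<longleftrightarrow> (\<forall>r<n. J ! r = I[i := I ! m, m := I ! i] ! r)"
    using assms by (auto simp: nth_list_update)
  then show ?thesis
    using assms by (simp add: tperm_def list_eq_iff_nth_eq)
qed

lemma tperm_sym: "tperm n i m I J = tperm n i m J I"
  unfolding tperm_def by auto

lemma tmul_tperm_left:
  assumes "I \<in> idx N n" "i < n" "m < n"
  shows "tmul N n (tperm n i m) B I K = B (I[i := I ! m, m := I ! i]) K"
proof -
  have swap_idx: "I[i := I ! m, m := I ! i] \<in> idx N n"
    using assms by (simp add: list_update_idx nth_idx_less)
  show ?thesis
    using assms length_idx[OF assms(1)] length_idx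
    by (subst tmul_eq_single[OF swap_idx]) (auto simp: tperm_eq_swap)
qed

lemma tmul_tperm_right:
  assumes "K \<in> idx N n" "i < n" "m < n"
  shows "tmul N n A (tperm n i m) I K = A I (K[i := K ! m, m := K ! i])"
proof -
  have swap_idx: "K[i := K ! m, m := K ! i] \<in> idx N n"
    using assms by (simp add: list_update_idx nth_idx_less)
  show ?thesis
    using assms length_idx[OF assms(1)] length_idx
    by (subst tmul_eq_single[OF swap_idx]) (auto simp: tperm_sym[of n i m _ K] tperm_eq_swap)
qed

lemma nth_swap_transpose:
  assumes "i < length I" "m < length I" "r < length I"
  shows "I[i := I ! m, m := I ! i] ! r = I ! transpose i m r"
  using assms by (auto simp: nth_list_update transpose_def)

lemma rmul_tperm_emb:
  assumes i: "i < n" and m: "m < n" and p: "p < n"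
  shows "rmul N n (tperm n i m) (emb n p A) = rmul N n (emb n (transpose i m p) A) (tperm n i m)"
  unfolding rmul_def
proof (rule trestr_eqI)
  fix I K assume I: "I \<in> idx N n" and K: "K \<in> idx N n"
  let ?\<sigma> = "transpose i m"
  have \<sigma>_less: "?\<sigma> r < n" if "r < n" for r
    using that i m by (simp add: transpose_def)
  have "(\<forall>r<n. r \<noteq> p \<longrightarrow> I ! ?\<sigma> r = K ! r) \<longleftrightarrow> (\<forall>r<n. r \<noteq> ?\<sigma> p \<longrightarrow> I ! r = K ! ?\<sigma> r)"
  proof
    assume H: "\<forall>r<n. r \<noteq> p \<longrightarrow> I ! ?\<sigma> r = K ! r"
    show "\<forall>r<n. r \<noteq> ?\<sigma> p \<longrightarrow> I ! r = K ! ?\<sigma> r"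
      using H \<sigma>_less by (metis transpose_involutory)
  next
    assume H: "\<forall>r<n. r \<noteq> ?\<sigma> p \<longrightarrow> I ! r = K ! ?\<sigma> r"
    show "\<forall>r<n. r \<noteq> p \<longrightarrow> I ! ?\<sigma> r = K ! r"
      using H \<sigma>_less by (metis transpose_involutory)
  qed
  then show "tmul N n (tperm n i m) (emb n p A) I K = tmul N n (emb n (?\<sigma> p) A) (tperm n i m) I K"
    using assms \<sigma>_less length_idx[OF I] length_idx[OF K]
    by (simp add: tmul_tperm_left[OF I i m] tmul_tperm_right[OF K i m] emb_def nth_swap_transpose)
qed

lemma rmul_emb_commute:
  assumes "\<And>a b c d. a < N \<Longrightarrow> b < N \<Longrightarrow> c < N \<Longrightarrow> d < N \<Longrightarrow> A a b * B c d = B c d * A a b"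
    and k: "k < n" and l: "l < n" and "k \<noteq> l"
  shows "rmul N n (emb n k A) (emb n l B) = rmul N n (emb n l B) (emb n k A)"
  unfolding rmul_def
proof (rule trestr_eqI)
  fix I K assume I: "I \<in> idx N n" and K: "K \<in> idx N n"
  show "tmul N n (emb n k A) (emb n l B) I K = tmul N n (emb n l B) (emb n k A) I K"
    using assms nth_idx_less[OF I] nth_idx_less[OF K]
    by (simp add: tmul_emb_emb[OF k l _ I K] tmul_emb_emb[OF l k _ I K] conj_commute)
qed

lemma rmul_emb_same:
  assumes "k < n"
  shows "rmul N n (emb n k A) (emb n k B) = trestr N n (emb n k (matmul N A B))"
  unfolding rmul_def by (rule trestr_eqI) (rule tmul_emb_same[OF assms])

lemma rmul_emb_D_X:
  assumes "\<And>a b c d. a < N \<Longrightarrow> b < N \<Longrightarrow> c < N \<Longrightarrow> d < N \<Longrightarrow>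
      D a b * X c d = X c d * D a b + of_bool (a = d \<and> c = b)"
    and k: "k < n" and m: "m < n" and "k \<noteq> m"
  shows "rmul N n (emb n k D) (emb n m X) = tadd (rmul N n (emb n m X) (emb n k D)) (trestr N n (tperm n k m))"
proof -
  have "tmul N n (emb n k D) (emb n m X) I K = tmul N n (emb n m X) (emb n k D) I K + tperm n k m I K"
    if I: "I \<in> idx N n" and K: "K \<in> idx N n" for I K
    using assms nth_idx_less[OF I] nth_idx_less[OF K]
    by (auto simp: tmul_emb_emb[OF k m _ I K] tmul_emb_emb[OF m k _ I K] tperm_def distrib_right conj_commute)
  then show ?thesis
    unfolding rmul_def trestr_def tadd_def by (auto simp: fun_eq_iff)
qed

lemma tmul_emb_emb_two:
  assumes "a < N" "b < N" "c < N" "d < N"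
  shows "tmul N 2 (emb 2 0 A) (emb 2 1 B) [a, c] [b, d] = A a b * B c d"
    and "tmul N 2 (emb 2 1 B) (emb 2 0 A) [a, c] [b, d] = B c d * A a b"
proof -
  have I: "[a, c] \<in> idx N 2" and K: "[b, d] \<in> idx N 2"
    using assms by (auto simp: idx_def)
  show "tmul N 2 (emb 2 0 A) (emb 2 1 B) [a, c] [b, d] = A a b * B c d"
    by (simp add: tmul_emb_emb[OF _ _ _ I K] less_2_cases_iff)
  show "tmul N 2 (emb 2 1 B) (emb 2 0 A) [a, c] [b, d] = B c d * A a b"
    by (simp add: tmul_emb_emb[OF _ _ _ I K] less_2_cases_iff)
qed

lemma entries_commute_of_teq:
  assumes "teq N 2 (tmul N 2 (emb 2 0 A) (emb 2 1 A)) (tmul N 2 (emb 2 1 A) (emb 2 0 A))"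
    and "a < N" "b < N" "c < N" "d < N"
  shows "A a b * A c d = A c d * A a b"
proof -
  have "[a, c] \<in> idx N 2" "[b, d] \<in> idx N 2"
    using assms by (auto simp: idx_def)
  with assms(1) have "tmul N 2 (emb 2 0 A) (emb 2 1 A) [a, c] [b, d] = tmul N 2 (emb 2 1 A) (emb 2 0 A) [a, c] [b, d]"
    unfolding teq_def by blast
  then show ?thesis
    by (simp only: tmul_emb_emb_two[OF assms(2-)])
qed

lemma entries_D_X_of_teq:
  fixes D X :: "nat \<Rightarrow> nat \<Rightarrow> 'a::ring_1"
  assumes "teq N 2 (tmul N 2 (emb 2 0 D) (emb 2 1 X))
                   (\<lambda>I J. tmul N 2 (emb 2 1 X) (emb 2 0 D) I J + tperm 2 0 1 I J)"
    and "a < N" "b < N" "c < N" "d < N"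
  shows "D a b * X c d = X c d * D a b + of_bool (a = d \<and> c = b)"
proof -
  have "[a, c] \<in> idx N 2" "[b, d] \<in> idx N 2"
    using assms by (auto simp: idx_def)
  with assms(1) have "tmul N 2 (emb 2 0 D) (emb 2 1 X) [a, c] [b, d]
      = tmul N 2 (emb 2 1 X) (emb 2 0 D) [a, c] [b, d] + tperm 2 0 1 [a, c] [b, d]"
    unfolding teq_def by blast
  moreover have "tperm 2 0 1 [a, c] [b, d] = (of_bool (a = d \<and> c = b) :: 'a)"
    by (simp add: tperm_def less_2_cases_iff)
  ultimately show ?thesis
    by (simp only: tmul_emb_emb_two[OF assms(2-)])
qed

definition jm_upto :: "nat \<Rightarrow> nat \<Rightarrow> nat \<Rightarrow> 'a::ring_1 tmat" where
  "jm_upto n m p = (\<lambda>I J. \<Sum>i<p. tperm n i m I J)"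

lemma jm_upto_0 [simp]: "jm_upto n m 0 = (\<lambda>I J. 0)"
  by (simp add: jm_upto_def)

lemma jm_upto_Suc: "jm_upto n m (Suc p) = tadd (jm_upto n m p) (tperm n p m)"
  by (simp add: jm_upto_def tadd_def)

lemma jm_eq_jm_upto: "jm n m = jm_upto n m m"
  by (simp add: jm_def jm_upto_def)

lemma rmul_jm_upto_emb_commute:
  assumes "q \<le> p" "p < m" "m < n"
  shows "rmul N n (jm_upto n m q) (emb n p A) = rmul N n (emb n p A) (jm_upto n m q)"
  using assms(1)
proof (induction q)
  case 0
  then show ?case by simp
next
  case (Suc q)
  have "rmul N n (tperm n q m) (emb n p A) = rmul N n (emb n p A) (tperm n q m)"
    using rmul_tperm_emb[of q n m p N A] Suc.prems assms by simp
  with Suc show ?case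
    by (simp add: jm_upto_Suc rmul_tadd_left rmul_tadd_right)
qed

definition rprod :: "nat \<Rightarrow> nat \<Rightarrow> (nat \<Rightarrow> 'a::ring_1 tmat) \<Rightarrow> nat \<Rightarrow> 'a tmat" where
  "rprod N n F p = trestr N n (tprod N n F p)"

lemma rprod_0 [simp]: "rprod N n F 0 = trestr N n tone"
  by (simp add: rprod_def)

lemma rprod_Suc: "rprod N n F (Suc p) = rmul N n (rprod N n F p) (F p)"
  by (simp add: rprod_def) (simp add: rmul_def)

abbreviation emb_prod :: "nat \<Rightarrow> nat \<Rightarrow> (nat \<Rightarrow> nat \<Rightarrow> 'a::ring_1) \<Rightarrow> nat \<Rightarrow> 'a tmat" where
  "emb_prod N n A \<equiv> rprod N n (\<lambda>k. emb n k A)"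

context
  fixes N n :: nat and X D :: "nat \<Rightarrow> nat \<Rightarrow> 'a::ring_1"
  assumes D_commute: "\<And>a b c d. a < N \<Longrightarrow> b < N \<Longrightarrow> c < N \<Longrightarrow> d < N \<Longrightarrow> D a b * D c d = D c d * D a b"
    and D_X: "\<And>a b c d. a < N \<Longrightarrow> b < N \<Longrightarrow> c < N \<Longrightarrow> d < N \<Longrightarrow>
      D a b * X c d = X c d * D a b + of_bool (a = d \<and> c = b)"
begin

lemma emb_prod_X_D:
  assumes m: "m < n"
  shows "p \<le> m \<Longrightarrow> rmul N n (rmul N n (emb_prod N n D p) (emb n m X)) (emb n m D)
     = tadd (rmul N n (rmul N n (emb n m X) (emb_prod N n D p)) (emb n m D))
            (rmul N n (emb_prod N n D p) (jm_upto n m p))"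
proof (induction p)
  case 0
  then show ?case by simp
next
  case (Suc p)
  let ?Q = "emb_prod N n D p" and ?Q' = "emb_prod N n D (Suc p)"
    and ?Xm = "emb n m X" and ?Dm = "emb n m D" and ?Dp = "emb n p D"
    and ?P = "tperm n p m" and ?J = "jm_upto n m p"
  have pm: "p < m" and p: "p < n"
    using Suc.prems m by simp_all
  have IH: "rmul N n (rmul N n ?Q ?Xm) ?Dm = tadd (rmul N n (rmul N n ?Xm ?Q) ?Dm) (rmul N n ?Q ?J)"
    using Suc by simp
  have D_X_swap: "rmul N n ?Dp ?Xm = tadd (rmul N n ?Xm ?Dp) (trestr N n ?P)"
    using rmul_emb_D_X[OF D_X p m] pm by simp
  have D_swap: "rmul N n ?Dp ?Dm = rmul N n ?Dm ?Dp"
    using rmul_emb_commute[OF D_commute p m] pm by simp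
  have P_D: "rmul N n ?P ?Dm = rmul N n ?Dp ?P"
    using rmul_tperm_emb[OF p m m] by simp
  have J_D: "rmul N n ?J ?Dp = rmul N n ?Dp ?J"
    using rmul_jm_upto_emb_commute[OF order_refl pm m] .
  have "rmul N n (rmul N n ?Q' ?Xm) ?Dm = rmul N n (rmul N n ?Q (rmul N n ?Dp ?Xm)) ?Dm"
    by (simp only: rprod_Suc rmul_assoc)
  also have "\<dots> = tadd (rmul N n (rmul N n ?Q (rmul N n ?Xm ?Dp)) ?Dm) (rmul N n (rmul N n ?Q ?P) ?Dm)"
    by (simp only: D_X_swap rmul_tadd_right rmul_tadd_left rmul_trestr_right)
  also have "\<dots> = tadd (rmul N n (rmul N n (rmul N n ?Q ?Xm) ?Dm) ?Dp) (rmul N n ?Q' ?P)"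
    by (simp only: rprod_Suc rmul_assoc D_swap P_D)
  also have "\<dots> = tadd (tadd (rmul N n (rmul N n (rmul N n ?Xm ?Q) ?Dm) ?Dp) (rmul N n (rmul N n ?Q ?J) ?Dp))
      (rmul N n ?Q' ?P)"
    by (simp only: IH rmul_tadd_left)
  also have "\<dots> = tadd (tadd (rmul N n (rmul N n ?Xm ?Q') ?Dm) (rmul N n ?Q' ?J)) (rmul N n ?Q' ?P)"
    by (simp only: rprod_Suc rmul_assoc D_swap J_D)
  finally show ?case
    by (simp only: jm_upto_Suc rmul_tadd_right tadd_assoc)
qed

lemma emb_prod_L_minus_jm:
  assumes m: "m < n"
  shows "rmul N n (emb_prod N n D m) (mminus (emb n m (matmul N X D)) (jm n m))
       = rmul N n (emb n m X) (emb_prod N n D (Suc m))"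
proof -
  have "rmul N n (emb_prod N n D m) (emb n m (matmul N X D))
      = rmul N n (emb_prod N n D m) (rmul N n (emb n m X) (emb n m D))"
    by (simp only: rmul_emb_same[OF m] rmul_trestr_right)
  also have "\<dots> = tadd (rmul N n (rmul N n (emb n m X) (emb_prod N n D m)) (emb n m D))
      (rmul N n (emb_prod N n D m) (jm_upto n m m))"
    by (simp only: rmul_assoc[symmetric] emb_prod_X_D[OF m order_refl])
  finally show ?thesis
    by (simp only: rmul_mminus_right jm_eq_jm_upto mminus_tadd_cancel rprod_Suc rmul_assoc)
qed

lemma rprod_L_minus_jm:
  "m \<le> n \<Longrightarrow> rprod N n (\<lambda>k. mminus (emb n k (matmul N X D)) (jm n k)) m
      = rmul N n (emb_prod N n X m) (emb_prod N n D m)"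
proof (induction m)
  case 0
  then show ?case by simp
next
  case (Suc m)
  then show ?case
    by (simp only: rprod_Suc Suc_le_lessD rmul_assoc emb_prod_L_minus_jm)
qed

end

theorem mainTheorem2:
  fixes N n :: nat
    and X D :: "nat \<Rightarrow> nat \<Rightarrow> 'a::ring_1"
  assumes XX: "teq N 2 (tmul N 2 (emb 2 0 X) (emb 2 1 X)) (tmul N 2 (emb 2 1 X) (emb 2 0 X))"
    and DD: "teq N 2 (tmul N 2 (emb 2 0 D) (emb 2 1 D)) (tmul N 2 (emb 2 1 D) (emb 2 0 D))"
    and DX: "teq N 2 (tmul N 2 (emb 2 0 D) (emb 2 1 X))
                     (\<lambda>I J. tmul N 2 (emb 2 1 X) (emb 2 0 D) I J + tperm 2 0 1 I J)"
    and n: "1 \<le> n"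
  shows "teq N n
           (tprod N n (\<lambda>k. mminus (emb n k (matmul N X D)) (jm n k)) n)
           (tmul N n (tprod N n (\<lambda>k. emb n k X) n) (tprod N n (\<lambda>k. emb n k D) n))"
proof -
  have "rprod N n (\<lambda>k. mminus (emb n k (matmul N X D)) (jm n k)) n
      = rmul N n (emb_prod N n X n) (emb_prod N n D n)"
    using rprod_L_minus_jm[OF entries_commute_of_teq[OF DD] entries_D_X_of_teq[OF DX]] by blast
  then show ?thesis
    unfolding teq_iff_trestr_eq by (simp add: rprod_def) (simp add: rmul_def)
qed

end
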